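(* Let $N$ be a finite set and $f: 2^{N} \to \mathbb{R} \cup \{-\infty\}$ an M$^\natural$-concave function. For any $X, Y \in \arg\max f$ and any $I \subseteq X \setminus Y$, there exists $J \subseteq Y \setminus X$ such that $(X \setminus I) \cup J \in \arg\max f$ and $(Y \setminus J) \cup I \in \arg\max f$.
   Context: $\arg\max f$ denotes the set of maximizers of $f$ over $2^N$. For $f: 2^N \to \mathbb{R}\cup\{-\infty\}$, $\mathrm{dom}\, f = \{X \subseteq N : f(X) > -\infty\}$. Notation: $X - i = X \setminus \{i\}$, $Y + i = Y \cup \{i\}$, $X - i + j = (X\setminus\{i\})\cup\{j\}$, $Y + i - j = (Y \cup\{i\})\setminus\{j\}$. Conventions: $(-\infty)+a = a+(-\infty) = (-\infty)+(-\infty) = -\infty$ for $a \in \mathbb{R}$, $-\infty \le -\infty$, and a maximum over an empty set is $-\infty$. A function $f: 2^N \to \mathbb{R}\cup\{-\infty\}$ with $\mathrm{dom}\, f \neq \emptyset$ is M$^\natural$-concave if for all $X, Y \subseteq N$ and $i \in X \setminus Y$: $$f(X)+f(Y) \le \max\Big[ f(X-i)+f(Y+i),\ \max_{j \in Y\setminus X}\{ f(X-i+j)+f(Y+i-j)\}\Big].$$ *)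

theory Defs
  imports "HOL-Library.Extended_Real"
begin

(* f : 2^N -> R u {-oo} is modelled as f :: 'a set => ereal, considered on subsets of N,
   with values never +oo. *)

definition valued_on :: "'a set \<Rightarrow> ('a set \<Rightarrow> ereal) \<Rightarrow> bool" where
  "valued_on N f \<longleftrightarrow> (\<forall>X. X \<subseteq> N \<longrightarrow> f X \<noteq> \<infinity>)"

definition dom_f :: "'a set \<Rightarrow> ('a set \<Rightarrow> ereal) \<Rightarrow> 'a set set" where
  "dom_f N f = {X. X \<subseteq> N \<and> f X > -\<infinity>}"

(* maximum over an empty set is -oo: realised by Sup in ereal (Sup {} = -oo) *)
definition M_nat_concave :: "'a set \<Rightarrow> ('a set \<Rightarrow> ereal) \<Rightarrow> bool" where
  "M_nat_concave N f \<longleftrightarrow> valued_on N f \<and> dom_f N f \<noteq> {} \<and>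
     (\<forall>X Y i. X \<subseteq> N \<longrightarrow> Y \<subseteq> N \<longrightarrow> i \<in> X - Y \<longrightarrow>
        f X + f Y \<le> max (f (X - {i}) + f (insert i Y))
          (Sup ((\<lambda>j. f (insert j (X - {i})) + f (insert i Y - {j})) ` (Y - X))))"

definition argmax_f :: "'a set \<Rightarrow> ('a set \<Rightarrow> ereal) \<Rightarrow> 'a set set" where
  "argmax_f N f = {X. X \<subseteq> N \<and> (\<forall>Y. Y \<subseteq> N \<longrightarrow> f Y \<le> f X)}"

end

theory Submission
  imports Defs
begin

text \<open>The maximizers of an M\<natural>-concave function form a family of sets satisfying the
exchange axiom, and the multiple exchange property holds for every such family.  It is proved
by induction on \<open>I\<close>: one single exchange at \<open>i \<in> I\<close> followed by the induction hypothesis,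
applied on both sides of the exchange, reduces the claim to finding a common member of the
two section families \<open>{K. (X - I) \<union> K \<in> B}\<close> and \<open>{K. (Y \<union> I) - K \<in> B}\<close> inside \<open>Y - X\<close>.
These families are again exchange families.  If they were disjoint, a discrete separation
theorem -- when no member of \<open>Q\<close> lies below a member of \<open>P\<close>, some test set \<open>S\<close> has
\<open>|K \<inter> S| < |L \<inter> S|\<close> for all \<open>K \<in> P\<close>, \<open>L \<in> Q\<close> (proved by induction on the ground set through
deletion and contraction) -- would contradict the near-nestings between the two families
produced by the induction hypothesis.\<close>

section \<open>Exchange families and the maximizers of an M\<natural>-concave function\<close>

definition M_nat_convex :: "'a set set \<Rightarrow> bool" where
  "M_nat_convex F \<longleftrightarrow> (\<forall>X\<in>F. \<forall>Y\<in>F. \<forall>i\<in>X - Y. (X - {i} \<in> F \<and> insert i Y \<in> F) \<or>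
     (\<exists>j\<in>Y - X. insert j (X - {i}) \<in> F \<and> insert i Y - {j} \<in> F))"

lemma M_nat_convexD:
  assumes "M_nat_convex F" "X \<in> F" "Y \<in> F" "i \<in> X" "i \<notin> Y"
  obtains "X - {i} \<in> F" "insert i Y \<in> F"
    | j where "j \<in> Y - X" "insert j (X - {i}) \<in> F" "insert i Y - {j} \<in> F"
  using assms unfolding M_nat_convex_def by blast

lemma argmax_f_if_sum_ge:
  assumes "valued_on N f" "X \<in> argmax_f N f" "Y \<in> argmax_f N f" "f X \<noteq> -\<infinity>"
    and "Z1 \<subseteq> N" "Z2 \<subseteq> N" "f X + f Y \<le> f Z1 + f Z2"
  shows "Z1 \<in> argmax_f N f" "Z2 \<in> argmax_f N f"
proof -
  have "X \<subseteq> N" "Y \<subseteq> N" using assms(2,3) unfolding argmax_f_def by auto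
  then have "f Y = f X" "f Z1 \<le> f X" "f Z2 \<le> f X"
    using assms(2,3,5,6) unfolding argmax_f_def by (auto intro: antisym)
  moreover have "f X \<noteq> \<infinity>" "f Z1 \<noteq> \<infinity>" "f Z2 \<noteq> \<infinity>"
    using assms(1,5,6) \<open>X \<subseteq> N\<close> unfolding valued_on_def by auto
  ultimately have "f Z1 = f X \<and> f Z2 = f X"
    using assms(4,7) by (cases "f X"; cases "f Z1"; cases "f Z2") auto
  then show "Z1 \<in> argmax_f N f" "Z2 \<in> argmax_f N f"
    using assms(2,5,6) unfolding argmax_f_def by auto
qed

lemma M_nat_convex_argmax_f:
  assumes "finite N" "M_nat_concave N f"
  shows "M_nat_convex (argmax_f N f)"
  unfolding M_nat_convex_def
proof (intro ballI)
  fix X Y i assume X: "X \<in> argmax_f N f" and Y: "Y \<in> argmax_f N f" and i: "i \<in> X - Y"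
  have vo: "valued_on N f" using assms(2) unfolding M_nat_concave_def by auto
  have XN: "X \<subseteq> N" and YN: "Y \<subseteq> N" using X Y unfolding argmax_f_def by auto
  obtain Z where Z: "Z \<subseteq> N" "f Z > -\<infinity>"
    using assms(2) unfolding M_nat_concave_def dom_f_def by auto
  moreover have "f Z \<le> f X" using X Z unfolding argmax_f_def by auto
  ultimately have fin: "f X \<noteq> -\<infinity>" by auto
  let ?S = "(\<lambda>j. f (insert j (X - {i})) + f (insert i Y - {j})) ` (Y - X)"
  have ineq: "f X + f Y \<le> max (f (X - {i}) + f (insert i Y)) (Sup ?S)"
    using assms(2) XN YN i unfolding M_nat_concave_def by blast
  show "(X - {i} \<in> argmax_f N f \<and> insert i Y \<in> argmax_f N f) \<or>
     (\<exists>j\<in>Y - X. insert j (X - {i}) \<in> argmax_f N f \<and> insert i Y - {j} \<in> argmax_f N f)"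
  proof (cases "f X + f Y \<le> f (X - {i}) + f (insert i Y)")
    case True
    have "X - {i} \<subseteq> N" "insert i Y \<subseteq> N" using XN YN i by auto
    then show ?thesis using argmax_f_if_sum_ge[OF vo X Y fin _ _ True] by blast
  next
    case False
    then have le: "f X + f Y \<le> Sup ?S" using ineq le_max_iff_disj by blast
    have "f Y = f X" using X Y XN YN unfolding argmax_f_def by (auto intro: antisym)
    moreover obtain r where "f X = ereal r"
      using fin vo XN unfolding valued_on_def by (cases "f X") auto
    ultimately have sum: "f X + f Y = ereal (r + r)" by simp
    have "?S \<noteq> {}"
    proof
      assume "?S = {}"
      then have "Sup ?S = -\<infinity>" by (simp only: Sup_empty bot_ereal_def)
      then show False using le sum by simp
    qed
    moreover have "finite ?S" using YN assms(1) by (simp add: finite_subset)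
    ultimately have "Sup ?S \<in> ?S" by (simp add: cSup_eq_Max)
    then obtain j where j: "j \<in> Y - X" "Sup ?S = f (insert j (X - {i})) + f (insert i Y - {j})"
      by blast
    have "insert j (X - {i}) \<subseteq> N" "insert i Y - {j} \<subseteq> N" using XN YN i j by auto
    then show ?thesis using argmax_f_if_sum_ge[OF vo X Y fin _ _ le[unfolded j(2)]] j(1) by blast
  qed
qed

section \<open>Sections of exchange families\<close>

lemma M_nat_convex_union_section:
  assumes "M_nat_convex B" "A \<inter> E = {}"
  shows "M_nat_convex {K. K \<subseteq> E \<and> A \<union> K \<in> B}"
  unfolding M_nat_convex_def
proof (intro ballI)
  let ?F = "{K. K \<subseteq> E \<and> A \<union> K \<in> B}"
  fix X Y i assume X: "X \<in> ?F" and Y: "Y \<in> ?F" and i: "i \<in> X - Y"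
  have iA: "i \<notin> A" using X i assms(2) by blast
  have XB: "A \<union> X \<in> B" and YB: "A \<union> Y \<in> B" and iX: "i \<in> A \<union> X" and iY: "i \<notin> A \<union> Y"
    using X Y i iA by auto
  show "(X - {i} \<in> ?F \<and> insert i Y \<in> ?F) \<or> (\<exists>j\<in>Y - X. insert j (X - {i}) \<in> ?F \<and> insert i Y - {j} \<in> ?F)"
  proof (rule M_nat_convexD[OF assms(1) XB YB iX iY])
    assume "A \<union> X - {i} \<in> B" "insert i (A \<union> Y) \<in> B"
    moreover have "A \<union> (X - {i}) = A \<union> X - {i}" "A \<union> insert i Y = insert i (A \<union> Y)"
      using iA by blast+
    ultimately have "A \<union> (X - {i}) \<in> B" "A \<union> insert i Y \<in> B" by metis+
    then have "X - {i} \<in> ?F" "insert i Y \<in> ?F" using X Y i by auto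
    then show ?thesis by blast
  next
    fix j assume j: "j \<in> A \<union> Y - (A \<union> X)" "insert j (A \<union> X - {i}) \<in> B" "insert i (A \<union> Y) - {j} \<in> B"
    moreover have "A \<union> insert j (X - {i}) = insert j (A \<union> X - {i})"
      "A \<union> (insert i Y - {j}) = insert i (A \<union> Y) - {j}"
      using iA j(1) by blast+
    ultimately have "A \<union> insert j (X - {i}) \<in> B" "A \<union> (insert i Y - {j}) \<in> B" by metis+
    then have "insert j (X - {i}) \<in> ?F" "insert i Y - {j} \<in> ?F" using X Y i j(1) by auto
    moreover have "j \<in> Y - X" using j(1) by blast
    ultimately show ?thesis by blast
  qed
qed

lemma M_nat_convex_diff_section:
  assumes "M_nat_convex B" "E \<subseteq> R"
  shows "M_nat_convex {K. K \<subseteq> E \<and> R - K \<in> B}"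
  unfolding M_nat_convex_def
proof (intro ballI)
  let ?F = "{K. K \<subseteq> E \<and> R - K \<in> B}"
  fix X Y i assume X: "X \<in> ?F" and Y: "Y \<in> ?F" and i: "i \<in> X - Y"
  have iR: "i \<in> R" using X i assms(2) by blast
  have YB: "R - Y \<in> B" and XB: "R - X \<in> B" and iY: "i \<in> R - Y" and iX: "i \<notin> R - X"
    using X Y i iR by auto
  show "(X - {i} \<in> ?F \<and> insert i Y \<in> ?F) \<or> (\<exists>j\<in>Y - X. insert j (X - {i}) \<in> ?F \<and> insert i Y - {j} \<in> ?F)"
  proof (rule M_nat_convexD[OF assms(1) YB XB iY iX])
    assume "R - Y - {i} \<in> B" "insert i (R - X) \<in> B"
    moreover have "R - insert i Y = R - Y - {i}" "R - (X - {i}) = insert i (R - X)"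
      using iR by blast+
    ultimately have "R - insert i Y \<in> B" "R - (X - {i}) \<in> B" by metis+
    then have "X - {i} \<in> ?F" "insert i Y \<in> ?F" using X Y i by auto
    then show ?thesis by blast
  next
    fix j assume j: "j \<in> R - X - (R - Y)" "insert j (R - Y - {i}) \<in> B" "insert i (R - X) - {j} \<in> B"
    moreover have "R - (insert i Y - {j}) = insert j (R - Y - {i})"
      "R - insert j (X - {i}) = insert i (R - X) - {j}"
      using iR j(1) i by blast+
    ultimately have "R - (insert i Y - {j}) \<in> B" "R - insert j (X - {i}) \<in> B" by metis+
    then have "insert j (X - {i}) \<in> ?F" "insert i Y - {j} \<in> ?F" using X Y i j(1) by auto
    moreover have "j \<in> Y - X" using j(1) by blast
    ultimately show ?thesis by blast
  qed
qed

definition deletion :: "'a \<Rightarrow> 'a set set \<Rightarrow> 'a set set" where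
  "deletion x F = {K \<in> F. x \<notin> K}"

definition contraction :: "'a \<Rightarrow> 'a set set \<Rightarrow> 'a set set" where
  "contraction x F = {K. x \<notin> K \<and> insert x K \<in> F}"

lemma M_nat_convex_deletion: "M_nat_convex F \<Longrightarrow> M_nat_convex (deletion x F)"
  unfolding M_nat_convex_def deletion_def by (auto; blast)

lemma M_nat_convex_contraction:
  assumes "M_nat_convex F"
  shows "M_nat_convex (contraction x F)"
proof -
  have "contraction x F = {K. K \<subseteq> - {x} \<and> {x} \<union> K \<in> F}"
    unfolding contraction_def by auto
  also have "M_nat_convex \<dots>" by (rule M_nat_convex_union_section[OF assms]) simp
  finally show ?thesis .
qed

lemma deletion_empty_iff: "deletion x F = {} \<longleftrightarrow> (\<forall>K\<in>F. x \<in> K)"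
  unfolding deletion_def by blast

lemma contraction_empty_iff: "contraction x F = {} \<longleftrightarrow> (\<forall>K\<in>F. x \<notin> K)"
proof -
  have "K - {x} \<in> contraction x F" if "K \<in> F" "x \<in> K" for K
    using that insert_absorb[OF that(2)] unfolding contraction_def by auto
  then show ?thesis unfolding contraction_def by blast
qed

lemma card_insert_Int:
  "finite K \<Longrightarrow> i \<notin> K \<Longrightarrow> card (insert i K \<inter> S) = card (K \<inter> S) + (if i \<in> S then 1 else 0)"
  by (auto simp: Int_insert_left)

lemma card_Int_remove:
  assumes "finite K" "j \<in> K"
  shows "card (K \<inter> S) = card ((K - {j}) \<inter> S) + (if j \<in> S then 1 else 0)"
proof -
  have "K = insert j (K - {j})" using assms(2) by blast
  then have "card (K \<inter> S) = card (insert j (K - {j}) \<inter> S)" by simp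
  also have "\<dots> = card ((K - {j}) \<inter> S) + (if j \<in> S then 1 else 0)"
    using assms(1) by (intro card_insert_Int) auto
  finally show ?thesis .
qed

lemma card_Int_swap:
  assumes "finite K" "i \<notin> K" "j \<in> K"
  shows "card (insert i (K - {j}) \<inter> S) + (if j \<in> S then 1 else 0) = card (K \<inter> S) + (if i \<in> S then 1 else 0)"
  using card_insert_Int[of "K - {j}" i S] card_Int_remove[OF assms(1,3), of S] assms by simp

lemma card_Int_insert:
  "finite K \<Longrightarrow> x \<notin> S \<Longrightarrow> card (K \<inter> insert x S) = card (K \<inter> S) + (if x \<in> K then 1 else 0)"
  by (cases "x \<in> K") (auto simp: Int_insert_right)

lemma card_Int_modular:
  "finite A \<Longrightarrow> card (A \<inter> (U \<union> V)) + card (A \<inter> (U \<inter> V)) = card (A \<inter> U) + card (A \<inter> V)"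
  using card_Un_Int[of "A \<inter> U" "A \<inter> V"] by (simp add: Int_Un_distrib Int_assoc Int_left_commute)

lemma card_Int_almost_superset:
  assumes "finite a" "J \<subseteq> a" "card (a - J) \<le> 1"
  shows "card (J \<inter> S) \<le> card (a \<inter> S)" "card (a \<inter> S) \<le> card (J \<inter> S) + 1"
proof -
  have "a \<inter> S = (J \<inter> S) \<union> ((a - J) \<inter> S)" "(J \<inter> S) \<inter> ((a - J) \<inter> S) = {}" using assms(2) by blast+
  moreover have "finite (J \<inter> S)" "finite ((a - J) \<inter> S)" using assms(1,2) finite_subset by auto
  ultimately have "card (a \<inter> S) = card (J \<inter> S) + card ((a - J) \<inter> S)" by (simp add: card_Un_disjoint)
  moreover have "card ((a - J) \<inter> S) \<le> card (a - J)" using assms(1) by (simp add: card_mono)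
  ultimately show "card (J \<inter> S) \<le> card (a \<inter> S)" "card (a \<inter> S) \<le> card (J \<inter> S) + 1"
    using assms(3) by linarith+
qed

lemma card_Int_Un_disjoint:
  "finite J0 \<Longrightarrow> finite J1 \<Longrightarrow> J0 \<inter> J1 = {} \<Longrightarrow> card ((J0 \<union> J1) \<inter> S) = card (J0 \<inter> S) + card (J1 \<inter> S)"
  by (simp add: Int_Un_distrib2 card_Un_disjoint disjoint_iff)

lemma card_insert_Diff_le_1: "card (insert k J - J) \<le> 1"
proof -
  have "insert k J - J \<subseteq> {k}" by blast
  then show ?thesis using card_mono[of "{k}"] by fastforce
qed

lemma finite_in_Pow:
  assumes "finite G" "F \<subseteq> Pow G" "K \<in> F"
  shows "finite K"
proof -
  have "K \<subseteq> G" using assms(2,3) by blast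
  then show ?thesis using assms(1) by (rule finite_subset)
qed

section \<open>Nestings and extremal members\<close>

lemma M_nat_convex_approach_by_removal:
  assumes "M_nat_convex F" "K \<in> F" "K' \<in> F" "i \<in> K" "i \<notin> K'"
  obtains K2 where "K2 \<in> F" "K - {i} \<subseteq> K2" "sym_diff K2 K' \<subset> sym_diff K K'"
proof (rule M_nat_convexD[OF assms])
  assume "K - {i} \<in> F"
  moreover have "sym_diff (K - {i}) K' \<subset> sym_diff K K'" using assms(4,5) by blast
  ultimately show thesis using that by blast
next
  fix k assume k: "k \<in> K' - K" "insert k (K - {i}) \<in> F"
  moreover have "sym_diff (insert k (K - {i})) K' \<subset> sym_diff K K'" using k(1) assms(4,5) by blast
  ultimately show thesis using that by blast
qed

lemma M_nat_convex_approach_by_insertion: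
  assumes "M_nat_convex F" "L \<in> F" "L' \<in> F" "i \<in> L'" "i \<notin> L"
  obtains L2 where "L2 \<in> F" "L2 \<subseteq> insert i L" "sym_diff L2 L' \<subset> sym_diff L L'"
proof (rule M_nat_convexD[OF assms(1,3,2,4,5)])
  assume "insert i L \<in> F"
  moreover have "sym_diff (insert i L) L' \<subset> sym_diff L L'" using assms(4,5) by blast
  ultimately show thesis using that by blast
next
  fix l assume l: "l \<in> L - L'" "insert i L - {l} \<in> F"
  moreover have "sym_diff (insert i L - {l}) L' \<subset> sym_diff L L'" using l(1) assms(4,5) by blast
  ultimately show thesis using that by blast
qed

lemma M_nat_convex_no_opposite_nestings:
  assumes "finite G" "P \<subseteq> Pow G" "Q \<subseteq> Pow G" "M_nat_convex P" "M_nat_convex Q" "P \<inter> Q = {}"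
    and "K0 \<in> P" "L0 \<in> Q" "L0 \<subseteq> K0"
    and K': "K' \<in> P" and L': "L' \<in> Q" "K' \<subseteq> L'"
  shows False
proof -
  define C where "C = (\<lambda>p. fst p \<in> P \<and> snd p \<in> Q \<and> snd p \<subseteq> fst p)"
  define d where "d = (\<lambda>p. card (sym_diff (fst p) K') + card (sym_diff (snd p) L'))"
  have "C (K0, L0)" unfolding C_def using assms(7-9) by simp
  then obtain p where "C p" and min: "\<forall>q. C q \<longrightarrow> d p \<le> d q"
    using ex_has_least_nat[of C _ d] by blast
  obtain K L where p: "p = (K, L)" by (cases p)
  have KL: "K \<in> P" "L \<in> Q" "L \<subseteq> K" using \<open>C p\<close> unfolding C_def p by auto
  have "sym_diff K K' \<subseteq> G" "sym_diff L L' \<subseteq> G" using KL K' L' assms(2,3) by blast+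
  then have finite: "finite (sym_diff K K')" "finite (sym_diff L L')"
    using assms(1) finite_subset by blast+
  \<comment> \<open>A pair \<open>L \<subseteq> K\<close> nearest to \<open>(K', L')\<close> has \<open>K \<subseteq> L\<close>: an element of \<open>K - L\<close> could be
    removed from \<open>K\<close> or inserted into \<open>L\<close> while approaching the target pair.\<close>
  have "K \<subseteq> L"
  proof (rule ccontr)
    assume "\<not> K \<subseteq> L"
    then obtain i where iK: "i \<in> K" and iL: "i \<notin> L" by blast
    show False
    proof (cases "i \<in> K'")
      case False
      obtain K2 where K2: "K2 \<in> P" "K - {i} \<subseteq> K2" "sym_diff K2 K' \<subset> sym_diff K K'"
        using M_nat_convex_approach_by_removal[OF assms(4) KL(1) K' iK False] .
      have "C (K2, L)" unfolding C_def using K2 KL iL by auto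
      then have "d p \<le> d (K2, L)" using min by blast
      moreover have "card (sym_diff K2 K') < card (sym_diff K K')"
        using psubset_card_mono[OF finite(1) K2(3)] .
      ultimately show False unfolding d_def p by simp
    next
      case True
      then have "i \<in> L'" using L'(2) by blast
      obtain L2 where L2: "L2 \<in> Q" "L2 \<subseteq> insert i L" "sym_diff L2 L' \<subset> sym_diff L L'"
        using M_nat_convex_approach_by_insertion[OF assms(5) KL(2) L'(1) \<open>i \<in> L'\<close> iL] .
      have "C (K, L2)" unfolding C_def using L2 KL iK by auto
      then have "d p \<le> d (K, L2)" using min by blast
      moreover have "card (sym_diff L2 L') < card (sym_diff L L')"
        using psubset_card_mono[OF finite(2) L2(3)] .
      ultimately show False unfolding d_def p by simp
    qed
  qed
  then have "K = L" using KL(3) by (rule subset_antisym)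
  then show False using KL(1,2) assms(6) by blast
qed

text \<open>A counterexample \<open>L\<close> nearest to \<open>K\<close> yields, by one exchange with \<open>K\<close>, either a set with
  more elements of \<open>V\<close> than \<open>K\<close> or a nearer counterexample.\<close>

lemma M_nat_convex_lex_max_is_max:
  assumes "finite G" "P \<subseteq> Pow G" "M_nat_convex P" "W \<subseteq> V" "K \<in> P"
    and Vmax: "\<And>K'. K' \<in> P \<Longrightarrow> card (K' \<inter> V) \<le> card (K \<inter> V)"
    and Wmax: "\<And>K'. K' \<in> P \<Longrightarrow> card (K' \<inter> V) = card (K \<inter> V) \<Longrightarrow> card (K' \<inter> W) \<le> card (K \<inter> W)"
    and "L \<in> P"
  shows "card (L \<inter> W) \<le> card (K \<inter> W)"
  using \<open>L \<in> P\<close>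
proof (induction "card (sym_diff L K)" arbitrary: L rule: less_induct)
  case less
  have finK: "finite K" and finL: "finite L"
    using finite_in_Pow[OF assms(1,2)] assms(5) less.prems by blast+
  show ?case
  proof (rule ccontr)
    assume lt: "\<not> card (L \<inter> W) \<le> card (K \<inter> W)"
    then have "\<not> L \<inter> W \<subseteq> K \<inter> W" using finK card_mono[of "K \<inter> W" "L \<inter> W"] by auto
    then obtain i where i: "i \<in> L" "i \<in> W" "i \<notin> K" by blast
    have iV: "i \<in> V" using i(2) assms(4) by blast
    show False
    proof (rule M_nat_convexD[OF assms(3) less.prems assms(5) i(1,3)])
      assume "insert i K \<in> P"
      then show False using Vmax card_insert_Int[OF finK i(3), of V] iV by fastforce
    next
      fix j assume j: "j \<in> K - L" "insert j (L - {i}) \<in> P" "insert i K - {j} \<in> P"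
      have K2: "insert i K - {j} = insert i (K - {j})" using i(3) j(1) by blast
      note cK2 = card_Int_swap[OF finK i(3), of j]
      have "j \<in> V" using Vmax[OF j(3)] cK2[of V] iV j(1) unfolding K2 by (simp split: if_splits)
      then have "card ((insert i K - {j}) \<inter> V) = card (K \<inter> V)" using cK2[of V] iV j(1) K2 by simp
      then have "j \<in> W" using Wmax[OF j(3)] cK2[of W] i(2) j(1) unfolding K2 by (simp split: if_splits)
      then have "card (insert j (L - {i}) \<inter> W) = card (L \<inter> W)"
        using card_Int_swap[OF finL _ i(1), of j W] i(2) j(1) by simp
      moreover have "sym_diff (insert j (L - {i})) K \<subset> sym_diff L K" using i j(1) by blast
      then have "card (sym_diff (insert j (L - {i})) K) < card (sym_diff L K)"
        using finK finL by (intro psubset_card_mono) auto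
      ultimately show False using less.hyps[OF _ j(2)] lt by simp
    qed
  qed
qed

lemma M_nat_convex_simultaneous_max:
  assumes "finite G" "P \<subseteq> Pow G" "P \<noteq> {}" "M_nat_convex P" "W \<subseteq> V"
  shows "\<exists>K\<in>P. (\<forall>K'\<in>P. card (K' \<inter> V) \<le> card (K \<inter> V)) \<and> (\<forall>K'\<in>P. card (K' \<inter> W) \<le> card (K \<inter> W))"
proof -
  have bound: "card (K \<inter> S) < Suc (card G)" if "K \<in> P" for K S
  proof -
    have "K \<inter> S \<subseteq> G" using that assms(2) by blast
    then show ?thesis using card_mono[OF assms(1)] by (simp add: le_imp_less_Suc)
  qed
  obtain K0 where "K0 \<in> P" using assms(3) by blast
  then obtain K1 where K1: "K1 \<in> P" "\<forall>K'. K' \<in> P \<longrightarrow> card (K' \<inter> V) \<le> card (K1 \<inter> V)"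
    using ex_has_greatest_nat[of "\<lambda>K. K \<in> P" K0 "\<lambda>K. card (K \<inter> V)"] bound by blast
  define M where "M = {K \<in> P. card (K \<inter> V) = card (K1 \<inter> V)}"
  have "K1 \<in> M" unfolding M_def using K1 by blast
  then obtain K where K: "K \<in> M" "\<forall>K'. K' \<in> M \<longrightarrow> card (K' \<inter> W) \<le> card (K \<inter> W)"
    using ex_has_greatest_nat[of "\<lambda>K. K \<in> M" K1 "\<lambda>K. card (K \<inter> W)"] bound
    unfolding M_def by blast
  have KP: "K \<in> P" and Vmax: "\<And>K'. K' \<in> P \<Longrightarrow> card (K' \<inter> V) \<le> card (K \<inter> V)"
    using K(1) K1(2) unfolding M_def by auto
  have Wmax: "\<And>K'. K' \<in> P \<Longrightarrow> card (K' \<inter> V) = card (K \<inter> V) \<Longrightarrow> card (K' \<inter> W) \<le> card (K \<inter> W)"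
    using K unfolding M_def by auto
  show ?thesis using KP Vmax M_nat_convex_lex_max_is_max[OF assms(1,2,4,5) KP Vmax Wmax] by blast
qed

lemma M_nat_convex_simultaneous_min:
  assumes "finite G" "Q \<subseteq> Pow G" "Q \<noteq> {}" "M_nat_convex Q" "W \<subseteq> V" "V \<subseteq> G"
  shows "\<exists>L\<in>Q. (\<forall>L'\<in>Q. card (L \<inter> V) \<le> card (L' \<inter> V)) \<and> (\<forall>L'\<in>Q. card (L \<inter> W) \<le> card (L' \<inter> W))"
proof -
  define Qc where "Qc = {K. K \<subseteq> G \<and> G - K \<in> Q}"
  have compl: "G - L \<in> Qc" if "L \<in> Q" for L
    using that assms(2) unfolding Qc_def by (auto simp: double_diff)
  have "M_nat_convex Qc" unfolding Qc_def by (rule M_nat_convex_diff_section[OF assms(4)]) simp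
  moreover have "Qc \<subseteq> Pow G" "Qc \<noteq> {}" using compl assms(3) unfolding Qc_def by auto
  ultimately obtain K where K: "K \<in> Qc" "\<forall>K'\<in>Qc. card (K' \<inter> V) \<le> card (K \<inter> V)"
    "\<forall>K'\<in>Qc. card (K' \<inter> W) \<le> card (K \<inter> W)"
    using M_nat_convex_simultaneous_max[OF assms(1) _ _ _ assms(5)] by blast
  have card_compl: "card ((G - L) \<inter> S) = card S - card (L \<inter> S)" "card (L \<inter> S) \<le> card S"
    if "S \<subseteq> G" for L S
  proof -
    have "finite S" using that assms(1) finite_subset by blast
    moreover have "(G - L) \<inter> S = S - L \<inter> S" using that by blast
    ultimately show "card ((G - L) \<inter> S) = card S - card (L \<inter> S)" "card (L \<inter> S) \<le> card S"
      by (simp_all add: card_Diff_subset card_mono)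
  qed
  have flip: "card ((G - K) \<inter> S) \<le> card (L' \<inter> S)"
    if "L' \<in> Q" "S \<subseteq> G" "card ((G - L') \<inter> S) \<le> card (K \<inter> S)" for L' S
  proof -
    have "L' \<subseteq> G" using that(1) assms(2) by blast
    then have "card ((G - (G - L')) \<inter> S) = card (L' \<inter> S)" by (simp add: double_diff)
    then show ?thesis using that(3) card_compl[OF that(2), of K] card_compl[OF that(2), of L']
      by linarith
  qed
  have "G - K \<in> Q" using K(1) unfolding Qc_def by blast
  moreover have "W \<subseteq> G" using assms(5,6) by blast
  ultimately show ?thesis using flip compl K(2,3) assms(6) by blast
qed

section \<open>Discrete separation\<close>

lemma M_nat_convex_deletion_above:
  assumes "M_nat_convex P" "K \<in> P" "finite K" "deletion x P \<noteq> {}" "x \<notin> S"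
  obtains K0 where "K0 \<in> deletion x P" "card (K \<inter> S) \<le> card (K0 \<inter> S)"
    "card (K0 \<inter> S) \<le> card (K \<inter> insert x S)"
proof (cases "x \<in> K")
  case False
  then show thesis using that[of K] assms(2,3,5) card_Int_insert unfolding deletion_def by auto
next
  case True
  obtain K' where K': "K' \<in> P" "x \<notin> K'" using assms(4) unfolding deletion_def by blast
  have cK: "card (K \<inter> insert x S) = card (K \<inter> S) + 1" using card_Int_insert[OF assms(3,5)] True by simp
  have e: "(K - {x}) \<inter> S = K \<inter> S" using assms(5) by blast
  show thesis
  proof (rule M_nat_convexD[OF assms(1,2) K'(1) True K'(2)])
    assume "K - {x} \<in> P"
    then show thesis using that[of "K - {x}"] e cK unfolding deletion_def by auto
  next
    fix k assume k: "k \<in> K' - K" "insert k (K - {x}) \<in> P"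
    have "card (insert k (K - {x}) \<inter> S) = card (K \<inter> S) + (if k \<in> S then 1 else 0)"
      using card_insert_Int[of "K - {x}" k S] assms(3) k(1) e by simp
    moreover have "x \<notin> insert k (K - {x})" using k(1) K'(2) by blast
    ultimately show thesis using that[of "insert k (K - {x})"] k(2) cK unfolding deletion_def by auto
  qed
qed

lemma M_nat_convex_contraction_below:
  assumes "M_nat_convex P" "K \<in> P" "finite K" "contraction x P \<noteq> {}" "x \<notin> S"
  obtains K1 where "K1 \<in> contraction x P" "card (K1 \<inter> S) \<le> card (K \<inter> S)"
    "card (K \<inter> insert x S) \<le> card (K1 \<inter> S) + 1"
proof (cases "x \<in> K")
  case True
  have "(K - {x}) \<inter> S = K \<inter> S" "insert x (K - {x}) = K" using True assms(5) by blast+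
  then show thesis using that[of "K - {x}"] assms(2) card_Int_insert[OF assms(3,5)]
    unfolding contraction_def by auto
next
  case False
  obtain K' where K': "K' \<in> P" "x \<in> K'" using assms(4) unfolding contraction_empty_iff by blast
  have cK: "card (K \<inter> insert x S) = card (K \<inter> S)" using card_Int_insert[OF assms(3,5)] False by simp
  show thesis
  proof (rule M_nat_convexD[OF assms(1) K'(1) assms(2) K'(2) False])
    assume "insert x K \<in> P"
    then show thesis using that[of K] False cK unfolding contraction_def by auto
  next
    fix k assume k: "k \<in> K - K'" "insert x K - {k} \<in> P"
    have "insert x (K - {k}) = insert x K - {k}" using k(1) K'(2) by blast
    moreover have "card (K \<inter> S) = card ((K - {k}) \<inter> S) + (if k \<in> S then 1 else 0)"
      using card_Int_remove[OF assms(3)] k(1) by simp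
    ultimately show thesis using that[of "K - {k}"] k(2) False cK unfolding contraction_def by auto
  qed
qed

definition separates :: "'a set \<Rightarrow> 'a set set \<Rightarrow> 'a set set \<Rightarrow> bool" where
  "separates S P Q \<longleftrightarrow> (\<forall>K\<in>P. \<forall>L\<in>Q. card (K \<inter> S) < card (L \<inter> S))"

text \<open>The comparison is additive so that the offsets by one produced by deletion and contraction
  never meet truncated subtraction.\<close>

lemma separates_transfer:
  assumes "separates S' P' Q'"
    and "\<And>K L. K \<in> P \<Longrightarrow> L \<in> Q \<Longrightarrow> \<exists>K'\<in>P'. \<exists>L'\<in>Q'.
      card (K \<inter> S) + card (L' \<inter> S') \<le> card (K' \<inter> S') + card (L \<inter> S)"
  shows "separates S P Q"
  unfolding separates_def
proof (intro ballI)
  fix K L assume "K \<in> P" "L \<in> Q"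
  then obtain K' L' where "K' \<in> P'" "L' \<in> Q'"
    and "card (K \<inter> S) + card (L' \<inter> S') \<le> card (K' \<inter> S') + card (L \<inter> S)"
    using assms(2) by blast
  moreover have "card (K' \<inter> S') < card (L' \<inter> S')"
    using assms(1) \<open>K' \<in> P'\<close> \<open>L' \<in> Q'\<close> unfolding separates_def by blast
  ultimately show "card (K \<inter> S) < card (L \<inter> S)" by linarith
qed

lemma separates_lift_deletion:
  assumes "finite G" "P \<subseteq> Pow G" "Q \<subseteq> Pow G" "M_nat_convex P" "M_nat_convex Q" "x \<notin> S"
    and "separates S (deletion x P) (deletion x Q)" "deletion x P \<noteq> {}" "deletion x Q \<noteq> {}"
    and "contraction x P = {} \<or> contraction x Q = {}"
  shows "separates S P Q \<or> separates (insert x S) P Q"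
proof -
  note finP = finite_in_Pow[OF assms(1,2)] and finQ = finite_in_Pow[OF assms(1,3)]
  have "separates S P Q" if "contraction x Q = {}"
  proof (rule separates_transfer[OF assms(7)])
    fix K L assume "K \<in> P" "L \<in> Q"
    obtain K0 where K0: "K0 \<in> deletion x P" "card (K \<inter> S) \<le> card (K0 \<inter> S)"
      "card (K0 \<inter> S) \<le> card (K \<inter> insert x S)"
      using M_nat_convex_deletion_above[OF assms(4) \<open>K \<in> P\<close> finP[OF \<open>K \<in> P\<close>] assms(8,6)] by blast
    have "L \<in> deletion x Q" using \<open>L \<in> Q\<close> that
      unfolding contraction_empty_iff deletion_def by blast
    moreover have "card (K \<inter> S) + card (L \<inter> S) \<le> card (K0 \<inter> S) + card (L \<inter> S)"
      using K0(2) by linarith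
    ultimately show "\<exists>K'\<in>deletion x P. \<exists>L'\<in>deletion x Q.
      card (K \<inter> S) + card (L' \<inter> S) \<le> card (K' \<inter> S) + card (L \<inter> S)" using K0(1) by blast
  qed
  moreover have "separates (insert x S) P Q" if "contraction x P = {}"
  proof (rule separates_transfer[OF assms(7)])
    fix K L assume "K \<in> P" "L \<in> Q"
    obtain L0 where L0: "L0 \<in> deletion x Q" "card (L \<inter> S) \<le> card (L0 \<inter> S)"
      "card (L0 \<inter> S) \<le> card (L \<inter> insert x S)"
      using M_nat_convex_deletion_above[OF assms(5) \<open>L \<in> Q\<close> finQ[OF \<open>L \<in> Q\<close>] assms(9,6)] by blast
    have "K \<in> deletion x P" "x \<notin> K" using \<open>K \<in> P\<close> that
      unfolding contraction_empty_iff deletion_def by blast+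
    moreover have "card (K \<inter> insert x S) = card (K \<inter> S)"
      using card_Int_insert[OF finP[OF \<open>K \<in> P\<close>] assms(6)] \<open>x \<notin> K\<close> by simp
    then have "card (K \<inter> insert x S) + card (L0 \<inter> S) \<le> card (K \<inter> S) + card (L \<inter> insert x S)"
      using L0(3) by linarith
    ultimately show "\<exists>K'\<in>deletion x P. \<exists>L'\<in>deletion x Q.
      card (K \<inter> insert x S) + card (L' \<inter> S) \<le> card (K' \<inter> S) + card (L \<inter> insert x S)"
      using L0(1) by blast
  qed
  ultimately show ?thesis using assms(10) by blast
qed

lemma separates_lift_contraction:
  assumes "finite G" "P \<subseteq> Pow G" "Q \<subseteq> Pow G" "M_nat_convex P" "M_nat_convex Q" "x \<notin> S"
    and "separates S (contraction x P) (contraction x Q)" "contraction x P \<noteq> {}" "contraction x Q \<noteq> {}"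
    and "deletion x P = {} \<or> deletion x Q = {}"
  shows "separates S P Q \<or> separates (insert x S) P Q"
proof -
  note finP = finite_in_Pow[OF assms(1,2)] and finQ = finite_in_Pow[OF assms(1,3)]
  have below: "\<exists>K1\<in>contraction x P. \<exists>L1\<in>contraction x Q.
      card (K \<inter> insert x S) \<le> card (K1 \<inter> S) + 1 \<and> card (L1 \<inter> S) \<le> card (L \<inter> S)"
    if K: "K \<in> P" and L: "L \<in> Q" for K L
  proof -
    obtain K1 where "K1 \<in> contraction x P" "card (K \<inter> insert x S) \<le> card (K1 \<inter> S) + 1"
      using M_nat_convex_contraction_below[OF assms(4) K finP[OF K] assms(8,6)] by blast
    moreover obtain L1 where "L1 \<in> contraction x Q" "card (L1 \<inter> S) \<le> card (L \<inter> S)"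
      using M_nat_convex_contraction_below[OF assms(5) L finQ[OF L] assms(9,6)] by blast
    ultimately show ?thesis by blast
  qed
  have "separates S P Q" if "deletion x P = {}"
  proof (rule separates_transfer[OF assms(7)])
    fix K L assume "K \<in> P" "L \<in> Q"
    have "x \<in> K" using \<open>K \<in> P\<close> that unfolding deletion_empty_iff by blast
    then have "card (K \<inter> insert x S) = card (K \<inter> S) + 1"
      using card_Int_insert[OF finP[OF \<open>K \<in> P\<close>] assms(6)] by simp
    moreover obtain K1 L1 where KL1: "K1 \<in> contraction x P" "L1 \<in> contraction x Q"
      "card (K \<inter> insert x S) \<le> card (K1 \<inter> S) + 1" "card (L1 \<inter> S) \<le> card (L \<inter> S)"
      using below[OF \<open>K \<in> P\<close> \<open>L \<in> Q\<close>] by blast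
    ultimately have "card (K \<inter> S) + card (L1 \<inter> S) \<le> card (K1 \<inter> S) + card (L \<inter> S)" by linarith
    then show "\<exists>K'\<in>contraction x P. \<exists>L'\<in>contraction x Q.
      card (K \<inter> S) + card (L' \<inter> S) \<le> card (K' \<inter> S) + card (L \<inter> S)"
      using KL1(1,2) by blast
  qed
  moreover have "separates (insert x S) P Q" if "deletion x Q = {}"
  proof (rule separates_transfer[OF assms(7)])
    fix K L assume "K \<in> P" "L \<in> Q"
    have "x \<in> L" using \<open>L \<in> Q\<close> that unfolding deletion_empty_iff by blast
    then have "card (L \<inter> insert x S) = card (L \<inter> S) + 1"
      using card_Int_insert[OF finQ[OF \<open>L \<in> Q\<close>] assms(6)] by simp
    moreover obtain K1 L1 where KL1: "K1 \<in> contraction x P" "L1 \<in> contraction x Q"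
      "card (K \<inter> insert x S) \<le> card (K1 \<inter> S) + 1" "card (L1 \<inter> S) \<le> card (L \<inter> S)"
      using below[OF \<open>K \<in> P\<close> \<open>L \<in> Q\<close>] by blast
    ultimately have "card (K \<inter> insert x S) + card (L1 \<inter> S) \<le> card (K1 \<inter> S) + card (L \<inter> insert x S)"
      by linarith
    then show "\<exists>K'\<in>contraction x P. \<exists>L'\<in>contraction x Q.
      card (K \<inter> insert x S) + card (L' \<inter> S) \<le> card (K' \<inter> S) + card (L \<inter> insert x S)"
      using KL1(1,2) by blast
  qed
  ultimately show ?thesis using assms(10) by blast
qed

lemma separates_lift_mixed:
  assumes "x \<notin> S" "separates S (contraction x P) (deletion x Q)"
    and "deletion x P = {}" "contraction x Q = {}"
  shows "separates S P Q"
proof (rule separates_transfer[OF assms(2)])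
  fix K L assume "K \<in> P" "L \<in> Q"
  have "x \<in> K" using \<open>K \<in> P\<close> assms(3) unfolding deletion_empty_iff by blast
  then have "K - {x} \<in> contraction x P" using \<open>K \<in> P\<close> insert_absorb[of x K]
    unfolding contraction_def by simp
  moreover have "L \<in> deletion x Q"
    using \<open>L \<in> Q\<close> assms(4) unfolding contraction_empty_iff deletion_def by blast
  moreover have "(K - {x}) \<inter> S = K \<inter> S" using assms(1) by blast
  then have "card (K \<inter> S) + card (L \<inter> S) \<le> card ((K - {x}) \<inter> S) + card (L \<inter> S)" by simp
  ultimately show "\<exists>K'\<in>contraction x P. \<exists>L'\<in>deletion x Q.
    card (K \<inter> S) + card (L' \<inter> S) \<le> card (K' \<inter> S) + card (L \<inter> S)" by blast
qed

lemma separates_singleton: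
  assumes "contraction x P = {}" "deletion x Q = {}"
  shows "separates {x} P Q"
proof -
  have "K \<inter> {x} = {}" "L \<inter> {x} = {x}" if "K \<in> P" "L \<in> Q" for K L
    using that assms unfolding contraction_empty_iff deletion_empty_iff by blast+
  then show ?thesis unfolding separates_def by simp
qed

lemma separates_of_extremal:
  assumes "\<forall>K'\<in>P. card (K' \<inter> T) \<le> card (K \<inter> T)" "\<forall>L'\<in>Q. card (L \<inter> T) \<le> card (L' \<inter> T)"
    and "card (K \<inter> T) < card (L \<inter> T)"
  shows "separates T P Q"
  unfolding separates_def
proof (intro ballI)
  fix K' L' assume "K' \<in> P" "L' \<in> Q"
  then show "card (K' \<inter> T) < card (L' \<inter> T)" using assms by (meson le_less_trans less_le_trans)
qed

text \<open>With \<open>T1 = S0 \<union> S1 + x\<close> and \<open>T2 = S0 \<inter> S1\<close>, modularity of \<open>|K \<inter> _|\<close> lets a simultaneous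
  maximizer of \<open>P\<close> and a simultaneous minimizer of \<open>Q\<close> be compared through both sections at
  once, so one of \<open>T1\<close>, \<open>T2\<close> separates.\<close>

lemma separates_lift_both:
  assumes "finite G" "P \<subseteq> Pow G" "Q \<subseteq> Pow G" "M_nat_convex P" "M_nat_convex Q"
    and "x \<in> G" "S0 \<subseteq> G" "S1 \<subseteq> G" "x \<notin> S0" "x \<notin> S1"
    and S0: "separates S0 (deletion x P) (deletion x Q)" "deletion x P \<noteq> {}" "deletion x Q \<noteq> {}"
    and S1: "separates S1 (contraction x P) (contraction x Q)" "contraction x P \<noteq> {}" "contraction x Q \<noteq> {}"
  shows "\<exists>S\<subseteq>G. separates S P Q"
proof -
  define T1 where "T1 = insert x (S0 \<union> S1)"
  define T2 where "T2 = S0 \<inter> S1"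
  have T: "T2 \<subseteq> T1" "T1 \<subseteq> G" unfolding T1_def T2_def using assms(6-8) by auto
  have "P \<noteq> {}" "Q \<noteq> {}" using S0(2,3) unfolding deletion_def by auto
  obtain K where K: "K \<in> P" "\<forall>K'\<in>P. card (K' \<inter> T1) \<le> card (K \<inter> T1)"
    "\<forall>K'\<in>P. card (K' \<inter> T2) \<le> card (K \<inter> T2)"
    using M_nat_convex_simultaneous_max[OF assms(1,2) \<open>P \<noteq> {}\<close> assms(4) T(1)] by blast
  obtain L where L: "L \<in> Q" "\<forall>L'\<in>Q. card (L \<inter> T1) \<le> card (L' \<inter> T1)"
    "\<forall>L'\<in>Q. card (L \<inter> T2) \<le> card (L' \<inter> T2)"
    using M_nat_convex_simultaneous_min[OF assms(1,3) \<open>Q \<noteq> {}\<close> assms(5) T] by blast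
  have fin: "finite K" "finite L"
    using finite_in_Pow[OF assms(1,2) K(1)] finite_in_Pow[OF assms(1,3) L(1)] .
  have T_via_S1: "T1 = S0 \<union> insert x S1" "T2 = S0 \<inter> insert x S1"
    unfolding T1_def T2_def using assms(9) by auto
  have modK: "card (K \<inter> T1) + card (K \<inter> T2) = card (K \<inter> S0) + card (K \<inter> insert x S1)"
    unfolding T_via_S1 by (rule card_Int_modular[OF fin(1)])
  have T_via_S0: "T1 = insert x S0 \<union> S1" "T2 = insert x S0 \<inter> S1"
    unfolding T1_def T2_def using assms(10) by auto
  have modL: "card (L \<inter> T1) + card (L \<inter> T2) = card (L \<inter> insert x S0) + card (L \<inter> S1)"
    unfolding T_via_S0 by (rule card_Int_modular[OF fin(2)])
  obtain K0 where K0: "K0 \<in> deletion x P" "card (K \<inter> S0) \<le> card (K0 \<inter> S0)"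
    using M_nat_convex_deletion_above[OF assms(4) K(1) fin(1) S0(2) assms(9)] by blast
  obtain L0 where L0: "L0 \<in> deletion x Q" "card (L0 \<inter> S0) \<le> card (L \<inter> insert x S0)"
    using M_nat_convex_deletion_above[OF assms(5) L(1) fin(2) S0(3) assms(9)] by blast
  obtain K1 where K1: "K1 \<in> contraction x P" "card (K \<inter> insert x S1) \<le> card (K1 \<inter> S1) + 1"
    using M_nat_convex_contraction_below[OF assms(4) K(1) fin(1) S1(2) assms(10)] by blast
  obtain L1 where L1: "L1 \<in> contraction x Q" "card (L1 \<inter> S1) \<le> card (L \<inter> S1)"
    using M_nat_convex_contraction_below[OF assms(5) L(1) fin(2) S1(3) assms(10)] by blast
  have "card (K0 \<inter> S0) < card (L0 \<inter> S0)" "card (K1 \<inter> S1) < card (L1 \<inter> S1)"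
    using S0(1) S1(1) K0(1) L0(1) K1(1) L1(1) unfolding separates_def by blast+
  then have "card (K \<inter> T1) + card (K \<inter> T2) < card (L \<inter> T1) + card (L \<inter> T2)"
    using modK modL K0(2) L0(2) K1(2) L1(2) by linarith
  then have "card (K \<inter> T1) < card (L \<inter> T1) \<or> card (K \<inter> T2) < card (L \<inter> T2)" by linarith
  then have "separates T1 P Q \<or> separates T2 P Q"
    using separates_of_extremal[OF K(2) L(2)] separates_of_extremal[OF K(3) L(3)] by blast
  then show ?thesis using T by blast
qed

lemma no_inclusion_sections:
  assumes "\<forall>K\<in>P. \<forall>L\<in>Q. \<not> L \<subseteq> K"
  shows "\<forall>K\<in>deletion x P. \<forall>L\<in>deletion x Q. \<not> L \<subseteq> K"
    and "\<forall>K\<in>contraction x P. \<forall>L\<in>contraction x Q. \<not> L \<subseteq> K"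
    and "\<forall>K\<in>contraction x P. \<forall>L\<in>deletion x Q. \<not> L \<subseteq> K"
proof -
  show "\<forall>K\<in>deletion x P. \<forall>L\<in>deletion x Q. \<not> L \<subseteq> K"
    using assms unfolding deletion_def by blast
  show "\<forall>K\<in>contraction x P. \<forall>L\<in>contraction x Q. \<not> L \<subseteq> K"
    using assms unfolding contraction_def by (blast dest: insert_mono)
  show "\<forall>K\<in>contraction x P. \<forall>L\<in>deletion x Q. \<not> L \<subseteq> K"
    using assms unfolding contraction_def deletion_def by (blast dest: subset_insertI2)
qed

lemma sections_Pow:
  assumes "F \<subseteq> Pow (insert x G)"
  shows "deletion x F \<subseteq> Pow G" "contraction x F \<subseteq> Pow G"
  using assms unfolding deletion_def contraction_def by auto

lemma M_nat_convex_separation_insert: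
  assumes "finite G" "x \<notin> G" "P \<subseteq> Pow (insert x G)" "Q \<subseteq> Pow (insert x G)" "P \<noteq> {}" "Q \<noteq> {}"
    and "M_nat_convex P" "M_nat_convex Q" "\<forall>K\<in>P. \<forall>L\<in>Q. \<not> L \<subseteq> K"
    and IH: "\<And>P Q. P \<subseteq> Pow G \<Longrightarrow> Q \<subseteq> Pow G \<Longrightarrow> P \<noteq> {} \<Longrightarrow> Q \<noteq> {} \<Longrightarrow>
      M_nat_convex P \<Longrightarrow> M_nat_convex Q \<Longrightarrow> \<forall>K\<in>P. \<forall>L\<in>Q. \<not> L \<subseteq> K \<Longrightarrow> \<exists>S\<subseteq>G. separates S P Q"
  shows "\<exists>S\<subseteq>insert x G. separates S P Q"
proof -
  have fin: "finite (insert x G)" using assms(1) by simp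
  note P = sections_Pow[OF assms(3)] M_nat_convex_deletion[OF assms(7)] M_nat_convex_contraction[OF assms(7)]
  note Q = sections_Pow[OF assms(4)] M_nat_convex_deletion[OF assms(8)] M_nat_convex_contraction[OF assms(8)]
  note no_incl = no_inclusion_sections[OF assms(9), of x]
  have xS: "x \<notin> S" if "S \<subseteq> G" for S using that assms(2) by blast
  have lift: "\<exists>S'\<subseteq>insert x G. separates S' P Q"
    if "S \<subseteq> G" "separates S P Q \<or> separates (insert x S) P Q" for S
  proof -
    have "S \<subseteq> insert x G" "insert x S \<subseteq> insert x G" using that(1) by blast+
    then show ?thesis using that(2) by blast
  qed
  have "deletion x P \<noteq> {} \<or> contraction x P \<noteq> {}" "deletion x Q \<noteq> {} \<or> contraction x Q \<noteq> {}"
    using assms(5,6) unfolding deletion_empty_iff contraction_empty_iff by blast+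
  then consider
      (del) "deletion x P \<noteq> {}" "deletion x Q \<noteq> {}" "contraction x P = {} \<or> contraction x Q = {}"
    | (con) "contraction x P \<noteq> {}" "contraction x Q \<noteq> {}" "deletion x P = {} \<or> deletion x Q = {}"
    | (mixed) "deletion x P = {}" "contraction x Q = {}"
    | (singleton) "contraction x P = {}" "deletion x Q = {}"
    | (all) "deletion x P \<noteq> {}" "deletion x Q \<noteq> {}" "contraction x P \<noteq> {}" "contraction x Q \<noteq> {}"
    by argo
  then show ?thesis
  proof cases
    case del
    obtain S where S: "S \<subseteq> G" "separates S (deletion x P) (deletion x Q)"
      using IH[OF P(1) Q(1) del(1,2) P(3) Q(3) no_incl(1)] by blast
    show ?thesis
      using lift[OF S(1) separates_lift_deletion[OF fin assms(3,4,7,8) xS[OF S(1)] S(2) del]] .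
  next
    case con
    obtain S where S: "S \<subseteq> G" "separates S (contraction x P) (contraction x Q)"
      using IH[OF P(2) Q(2) con(1,2) P(4) Q(4) no_incl(2)] by blast
    show ?thesis
      using lift[OF S(1) separates_lift_contraction[OF fin assms(3,4,7,8) xS[OF S(1)] S(2) con]] .
  next
    case mixed
    then have "contraction x P \<noteq> {}" "deletion x Q \<noteq> {}"
      using assms(5,6) unfolding deletion_empty_iff contraction_empty_iff by blast+
    then obtain S where S: "S \<subseteq> G" "separates S (contraction x P) (deletion x Q)"
      using IH[OF P(2) Q(1) _ _ P(4) Q(3) no_incl(3)] by blast
    have "separates S P Q" by (rule separates_lift_mixed[OF xS[OF S(1)] S(2) mixed])
    then show ?thesis using lift[OF S(1)] by blast
  next
    case singleton
    have "{x} \<subseteq> insert x G" by blast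
    then show ?thesis using separates_singleton[OF singleton] by blast
  next
    case all
    obtain S0 where S0: "S0 \<subseteq> G" "separates S0 (deletion x P) (deletion x Q)"
      using IH[OF P(1) Q(1) all(1,2) P(3) Q(3) no_incl(1)] by blast
    obtain S1 where S1: "S1 \<subseteq> G" "separates S1 (contraction x P) (contraction x Q)"
      using IH[OF P(2) Q(2) all(3,4) P(4) Q(4) no_incl(2)] by blast
    have "S0 \<subseteq> insert x G" "S1 \<subseteq> insert x G" using S0(1) S1(1) by blast+
    then show ?thesis using separates_lift_both[OF fin assms(3,4,7,8) insertI1 _ _
        xS[OF S0(1)] xS[OF S1(1)] S0(2) all(1,2) S1(2) all(3,4)] by blast
  qed
qed

lemma M_nat_convex_separation:
  assumes "finite G" "P \<subseteq> Pow G" "Q \<subseteq> Pow G" "P \<noteq> {}" "Q \<noteq> {}"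
    and "M_nat_convex P" "M_nat_convex Q" "\<forall>K\<in>P. \<forall>L\<in>Q. \<not> L \<subseteq> K"
  shows "\<exists>S\<subseteq>G. separates S P Q"
  using assms
proof (induction G arbitrary: P Q rule: finite_induct)
  case empty
  then have "P = {{}}" "Q = {{}}" by auto
  then show ?case using empty.prems(7) by simp
next
  case (insert x G)
  show ?case by (rule M_nat_convex_separation_insert[OF insert.hyps insert.prems insert.IH])
qed

section \<open>Multiple exchange\<close>

lemma M_nat_convex_no_crossing:
  assumes "finite E" "P \<subseteq> Pow E" "Q \<subseteq> Pow E" "M_nat_convex P" "M_nat_convex Q" "P \<inter> Q = {}"
    and "J0 \<inter> J1 = {}" "J0 \<inter> J2 = {}" "J0 \<union> J1 \<in> Q" "J0 \<union> J2 \<in> P"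
    and a: "a \<in> P" "J1 \<subseteq> a" "card (a - J1) \<le> 1"
    and b: "b \<in> Q" "J2 \<subseteq> b" "card (b - J2) \<le> 1"
  shows False
proof -
  have "a \<subseteq> E" "b \<subseteq> E" "J0 \<subseteq> E" "J1 \<subseteq> E" "J2 \<subseteq> E"
    using assms(2,3,9,10) a(1) b(1) by blast+
  then have "finite a" "finite b" "finite J0" "finite J1" "finite J2"
    by (simp_all add: finite_subset[OF _ assms(1)])
  note bounds = card_Int_almost_superset[OF \<open>finite a\<close> a(2,3)] card_Int_almost_superset[OF \<open>finite b\<close> b(2,3)]
    card_Int_Un_disjoint[OF \<open>finite J0\<close> \<open>finite J1\<close> assms(7)]
    card_Int_Un_disjoint[OF \<open>finite J0\<close> \<open>finite J2\<close> assms(8)]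
  have "P \<noteq> {}" "Q \<noteq> {}" using a(1) b(1) by auto
  have "(\<forall>K\<in>P. \<forall>L\<in>Q. \<not> L \<subseteq> K) \<or> (\<forall>L\<in>Q. \<forall>K\<in>P. \<not> K \<subseteq> L)"
    using M_nat_convex_no_opposite_nestings[OF assms(1-6)] by blast
  then show False
  proof
    assume "\<forall>K\<in>P. \<forall>L\<in>Q. \<not> L \<subseteq> K"
    then obtain S where "separates S P Q"
      using M_nat_convex_separation[OF assms(1-3) \<open>P \<noteq> {}\<close> \<open>Q \<noteq> {}\<close> assms(4,5)] by blast
    then have "card (a \<inter> S) < card ((J0 \<union> J1) \<inter> S)" "card ((J0 \<union> J2) \<inter> S) < card (b \<inter> S)"
      using a(1) b(1) assms(9,10) unfolding separates_def by blast+
    then show False using bounds[of S] by linarith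
  next
    assume "\<forall>L\<in>Q. \<forall>K\<in>P. \<not> K \<subseteq> L"
    then obtain S where "separates S Q P"
      using M_nat_convex_separation[OF assms(1,3,2) \<open>Q \<noteq> {}\<close> \<open>P \<noteq> {}\<close> assms(5,4)] by blast
    then have "card ((J0 \<union> J1) \<inter> S) < card (a \<inter> S)" "card (b \<inter> S) < card ((J0 \<union> J2) \<inter> S)"
      using a(1) b(1) assms(9,10) unfolding separates_def by blast+
    then show False using bounds[of S] by linarith
  qed
qed

lemma M_nat_convex_union_section_near:
  assumes "M_nat_convex B" "A \<inter> E = {}" "i \<notin> A" "i \<notin> E" "J \<subseteq> E" "J' \<subseteq> E"
    and "insert i (A \<union> J) \<in> B" "A \<union> J' \<in> B"
  shows "\<exists>a. a \<subseteq> E \<and> A \<union> a \<in> B \<and> J \<subseteq> a \<and> card (a - J) \<le> 1"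
proof -
  have "i \<in> insert i (A \<union> J)" "i \<notin> A \<union> J'" using assms(3,4,6) by blast+
  then show ?thesis
  proof (rule M_nat_convexD[OF assms(1,7,8)])
    assume X: "insert i (A \<union> J) - {i} \<in> B"
    have "insert i (A \<union> J) - {i} = A \<union> J" using assms(3-5) by blast
    with X have "A \<union> J \<in> B" by (simp only:)
    then show ?thesis using assms(5) by (intro exI[of _ J]) simp
  next
    fix k assume k: "k \<in> A \<union> J' - insert i (A \<union> J)" "insert k (insert i (A \<union> J) - {i}) \<in> B"
    have "insert k (insert i (A \<union> J) - {i}) = A \<union> insert k J" using assms(3-5) k(1) by blast
    with k(2) have "A \<union> insert k J \<in> B" by (simp only:)
    moreover have "insert k J \<subseteq> E" using assms(5,6) k(1) by blast
    ultimately show ?thesis using card_insert_Diff_le_1[of k J]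
      by (intro exI[of _ "insert k J"]) (simp add: subset_insertI)
  qed
qed

lemma M_nat_convex_diff_section_near:
  assumes "M_nat_convex B" "E \<subseteq> R" "i \<in> R" "i \<notin> E" "J \<subseteq> E" "J' \<subseteq> E"
    and "R - J - {i} \<in> B" "R - J' \<in> B"
  shows "\<exists>b. b \<subseteq> E \<and> R - b \<in> B \<and> J \<subseteq> b \<and> card (b - J) \<le> 1"
proof -
  have "i \<in> R - J'" "i \<notin> R - J - {i}" using assms(3,4,6) by blast+
  then show ?thesis
  proof (rule M_nat_convexD[OF assms(1,8,7)])
    assume Y: "insert i (R - J - {i}) \<in> B"
    have "insert i (R - J - {i}) = R - J" using assms(3-5) by blast
    with Y have "R - J \<in> B" by (simp only:)
    then show ?thesis using assms(5) by (intro exI[of _ J]) simp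
  next
    fix l assume l: "l \<in> R - J - {i} - (R - J')" "insert i (R - J - {i}) - {l} \<in> B"
    have "insert i (R - J - {i}) - {l} = R - insert l J" using assms(3-5) l(1) by blast
    with l(2) have "R - insert l J \<in> B" by (simp only:)
    moreover have "insert l J \<subseteq> E" using assms(5,6) l(1) by blast
    ultimately show ?thesis using card_insert_Diff_le_1[of l J]
      by (intro exI[of _ "insert l J"]) (simp add: subset_insertI)
  qed
qed

lemma M_nat_convex_union_diff_sections_meet:
  assumes "M_nat_convex B" "finite E" "A \<inter> E = {}" "E \<subseteq> R" "i \<notin> A" "i \<in> R" "i \<notin> E"
    and J: "J0 \<subseteq> E" "J1 \<subseteq> E" "J2 \<subseteq> E" "J0 \<inter> J1 = {}" "J0 \<inter> J2 = {}"
    and B: "insert i (A \<union> J1) \<in> B" "R - (J0 \<union> J1) \<in> B" "A \<union> (J0 \<union> J2) \<in> B" "R - J2 - {i} \<in> B"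
  shows "\<exists>K\<subseteq>E. A \<union> K \<in> B \<and> R - K \<in> B"
proof (rule ccontr)
  assume none: "\<not> ?thesis"
  define P where "P = {K. K \<subseteq> E \<and> A \<union> K \<in> B}"
  define Q where "Q = {K. K \<subseteq> E \<and> R - K \<in> B}"
  have "P \<inter> Q = {}" using none unfolding P_def Q_def by blast
  have mc: "M_nat_convex P" "M_nat_convex Q" unfolding P_def Q_def
    using M_nat_convex_union_section[OF assms(1,3)] M_nat_convex_diff_section[OF assms(1,4)] by blast+
  have "P \<subseteq> Pow E" "Q \<subseteq> Pow E" unfolding P_def Q_def by auto
  have "J0 \<union> J1 \<in> Q" "J0 \<union> J2 \<in> P" unfolding P_def Q_def using J B(2,3) by auto
  have "J0 \<union> J1 \<subseteq> E" "J0 \<union> J2 \<subseteq> E" using J(1-3) by blast+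
  obtain a where "a \<in> P" "J1 \<subseteq> a" "card (a - J1) \<le> 1"
    using M_nat_convex_union_section_near[OF assms(1,3,5,7) J(2) \<open>J0 \<union> J2 \<subseteq> E\<close> B(1,3)]
    unfolding P_def by blast
  moreover obtain b where "b \<in> Q" "J2 \<subseteq> b" "card (b - J2) \<le> 1"
    using M_nat_convex_diff_section_near[OF assms(1,4,6,7) J(3) \<open>J0 \<union> J1 \<subseteq> E\<close> B(4,2)]
    unfolding Q_def by blast
  ultimately show False
    using M_nat_convex_no_crossing[OF assms(2) \<open>P \<subseteq> Pow E\<close> \<open>Q \<subseteq> Pow E\<close> mc \<open>P \<inter> Q = {}\<close> J(4,5)
        \<open>J0 \<union> J1 \<in> Q\<close> \<open>J0 \<union> J2 \<in> P\<close>] by blast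
qed

lemma M_nat_convex_multiple_exchange_step:
  assumes "M_nat_convex B" "finite (Y - X)" "insert i I \<subseteq> X - Y" "i \<notin> I" "J0 \<subseteq> Y - X"
    and J1: "J1 \<subseteq> (insert i Y - J0) - X" "(X - I) \<union> J1 \<in> B" "((insert i Y - J0) - J1) \<union> I \<in> B"
    and J2: "J2 \<subseteq> Y - ((X - {i}) \<union> J0)" "(((X - {i}) \<union> J0) - I) \<union> J2 \<in> B" "(Y - J2) \<union> I \<in> B"
  shows "\<exists>J\<subseteq>Y - X. (X - insert i I) \<union> J \<in> B \<and> (Y - J) \<union> insert i I \<in> B"
proof -
  \<comment> \<open>Every candidate \<open>K \<subseteq> Y - X\<close> satisfies \<open>(X - insert i I) \<union> K = A \<union> K\<close> and
    \<open>(Y - K) \<union> insert i I = R - K\<close>.\<close>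
  define A where "A = X - insert i I"
  define R where "R = Y \<union> insert i I"
  have frame: "A \<inter> (Y - X) = {}" "Y - X \<subseteq> R" "i \<notin> A" "i \<in> R" "i \<notin> Y - X"
    unfolding A_def R_def using assms(3) by auto
  have J: "J1 \<subseteq> Y - X" "J2 \<subseteq> Y - X" "J0 \<inter> J1 = {}" "J0 \<inter> J2 = {}"
    using J1(1) J2(1) assms(3) by auto
  have "insert i (A \<union> J1) = (X - I) \<union> J1"
    "R - (J0 \<union> J1) = ((insert i Y - J0) - J1) \<union> I"
    "A \<union> (J0 \<union> J2) = (((X - {i}) \<union> J0) - I) \<union> J2"
    "R - J2 - {i} = (Y - J2) \<union> I"
    unfolding A_def R_def using assms(3-5) J1(1) J2(1) by auto
  then have "insert i (A \<union> J1) \<in> B" "R - (J0 \<union> J1) \<in> B" "A \<union> (J0 \<union> J2) \<in> B" "R - J2 - {i} \<in> B"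
    using J1(2,3) J2(2,3) by simp_all
  then obtain K where K: "K \<subseteq> Y - X" "A \<union> K \<in> B" "R - K \<in> B"
    using M_nat_convex_union_diff_sections_meet[OF assms(1,2) frame assms(5) J] by blast
  have "(Y - K) \<union> insert i I = R - K" unfolding R_def using K(1) assms(3) by blast
  then have "(X - insert i I) \<union> K \<in> B" "(Y - K) \<union> insert i I \<in> B"
    using K(2,3) unfolding A_def by simp_all
  then show ?thesis using K(1) by blast
qed

lemma M_nat_convex_multiple_exchange:
  assumes "M_nat_convex B" "finite G" "B \<subseteq> Pow G" "X \<in> B" "Y \<in> B" "I \<subseteq> X - Y"
  shows "\<exists>J\<subseteq>Y - X. (X - I) \<union> J \<in> B \<and> (Y - J) \<union> I \<in> B"
proof -
  have "X \<subseteq> G" "Y \<subseteq> G" using assms(3-5) by blast+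
  then have "finite X" "finite Y" using assms(2) by (simp_all add: finite_subset)
  then have "finite I" "finite (Y - X)" using assms(6) by (simp_all add: finite_subset)
  then show ?thesis using assms(4-6)
  proof (induction I arbitrary: X Y rule: finite_induct)
    case empty
    then show ?case by (intro exI[of _ "{}"]) simp
  next
    case (insert i I)
    have iX: "i \<in> X" and iY: "i \<notin> Y" using insert.prems(4) by blast+
    obtain J0 where J0: "J0 \<subseteq> Y - X" "(X - {i}) \<union> J0 \<in> B" "insert i Y - J0 \<in> B"
    proof (rule M_nat_convexD[OF assms(1) insert.prems(2,3) iX iY])
      assume "X - {i} \<in> B" "insert i Y \<in> B"
      then show thesis using that[of "{}"] by simp
    next
      fix j assume "j \<in> Y - X" "insert j (X - {i}) \<in> B" "insert i Y - {j} \<in> B"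
      then show thesis using that[of "{j}"] by simp
    qed
    have "insert i Y - J0 - X \<subseteq> Y - X" "Y - ((X - {i}) \<union> J0) \<subseteq> Y - X" using iX iY by blast+
    then have "finite (insert i Y - J0 - X)" "finite (Y - ((X - {i}) \<union> J0))"
      using insert.prems(1) by (simp_all add: finite_subset)
    moreover have "I \<subseteq> X - (insert i Y - J0)" "I \<subseteq> ((X - {i}) \<union> J0) - Y"
      using insert.prems(4) insert.hyps(2) by blast+
    ultimately obtain J1 J2 where
      "J1 \<subseteq> (insert i Y - J0) - X" "(X - I) \<union> J1 \<in> B" "((insert i Y - J0) - J1) \<union> I \<in> B"
      "J2 \<subseteq> Y - ((X - {i}) \<union> J0)" "(((X - {i}) \<union> J0) - I) \<union> J2 \<in> B" "(Y - J2) \<union> I \<in> B"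
      using insert.IH[OF _ insert.prems(2) J0(3)] insert.IH[OF _ J0(2) insert.prems(3)] by meson
    then show ?case
      using M_nat_convex_multiple_exchange_step[OF assms(1) insert.prems(1,4) insert.hyps(2) J0(1)]
      by blast
  qed
qed

theorem theorem2:
  fixes N :: "'a set" and f :: "'a set \<Rightarrow> ereal"
  assumes "finite N"
    and "M_nat_concave N f"
    and "X \<in> argmax_f N f" and "Y \<in> argmax_f N f"
    and "I \<subseteq> X - Y"
  shows "\<exists>J. J \<subseteq> Y - X \<and> (X - I) \<union> J \<in> argmax_f N f \<and> (Y - J) \<union> I \<in> argmax_f N f"
proof -
  have "argmax_f N f \<subseteq> Pow N" unfolding argmax_f_def by auto
  then show ?thesis
    using M_nat_convex_multiple_exchange[OF M_nat_convex_argmax_f[OF assms(1,2)] assms(1) _ assms(3-5)]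
    by blast
qed

end
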